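(* For $i\ge0$ and $j\ge0$, the map $\phi_i$ restricts to a linear isomorphism of $M_i(j)$ onto the $A_*$-subcomodule $N_{i-1}(j)\subset(A/\!/A(i-1))_*$.
   Context: $A_*$ is the mod $2$ dual Steenrod algebra with conjugate generators $\bar\xi_k$. For $i\ge-1$, $A(i)_*=\mathbb{F}_2[\bar\xi_1,\dots,\bar\xi_{i+1}]/(\bar\xi_1^{2^{i+1}},\dots,\bar\xi_{i+1}^2)$ and $(A/\!/A(i))_*=A_*\square_{A(i)_*}\mathbb{F}_2=\mathbb{F}_2[\bar\xi_1^{2^{i+1}},\bar\xi_2^{2^i},\dots,\bar\xi_{i+1}^2,\bar\xi_{i+2},\dots]$. Give $A_*$ the multiplicative "Brown–Gitler weight" in which $\bar\xi_k$ has weight $2^{k-1}$; every monomial of $(A/\!/A(i))_*$ has weight divisible by $2^{i+1}$. $N_i(j)\subset(A/\!/A(i))_*$ is the span of monomials of weight $\le2^{i+1}j$ (an $A_*$-subcomodule), and $M_i(j)\subset(A/\!/A(i))_*$ is the span of monomials of weight exactly $2^{i+1}j$. $\phi_i:(A/\!/A(i))_*\to(A/\!/A(i-1))_*$ is the ring map with $\phi_i(\bar\xi_k^{2^l})=\bar\xi_{k-1}^{2^l}$ for $k>1$ and $\phi_i(\bar\xi_1^{2^{i+1}})=1$. *)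

theory Defs
  imports Main "HOL-Library.Poly_Mapping" "HOL-Library.Z2"
begin

text \<open>Model of the dual Steenrod algebra A_* = F_2[xi_1, xi_2, ...] (conjugate generators).
  A monomial is a finitely supported exponent vector; index k (0-based) records the
  exponent of xi_(k+1).  An element of A_* is a finitely supported F_2-valued function
  on monomials (the type bit of HOL-Library.Z2 is the field F_2).\<close>

type_synonym mono = "nat \<Rightarrow>\<^sub>0 nat"
type_synonym dualA = "mono \<Rightarrow>\<^sub>0 bit"

definition bg_weight :: "mono \<Rightarrow> nat" where
  "bg_weight m = (\<Sum>k\<in>Poly_Mapping.keys m. Poly_Mapping.lookup m k * 2 ^ k)"

text \<open>Monomials of (A//A(i))_* = F_2[xi_1^(2^(i+1)), xi_2^(2^i), ..., xi_(i+1)^2, xi_(i+2), ...],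
  for integer i \<ge> -1: the exponent of xi_(k+1) must be divisible by 2^(i+1-k) when k \<le> i.\<close>
definition quot_mono :: "int \<Rightarrow> mono \<Rightarrow> bool" where
  "quot_mono i m = (\<forall>k::nat. int k \<le> i \<longrightarrow> 2 ^ nat (i + 1 - int k) dvd Poly_Mapping.lookup m k)"

definition AmodAi :: "int \<Rightarrow> dualA set" where
  "AmodAi i = {p. \<forall>m\<in>Poly_Mapping.keys p. quot_mono i m}"

definition N_sub :: "int \<Rightarrow> nat \<Rightarrow> dualA set" where
  "N_sub i j = {p. \<forall>m\<in>Poly_Mapping.keys p. quot_mono i m \<and> bg_weight m \<le> 2 ^ nat (i + 1) * j}"

definition M_sub :: "int \<Rightarrow> nat \<Rightarrow> dualA set" where
  "M_sub i j = {p. \<forall>m\<in>Poly_Mapping.keys p. quot_mono i m \<and> bg_weight m = 2 ^ nat (i + 1) * j}"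

text \<open>phi_i on monomials: xi_1^(e_1) xi_2^(e_2) ... |-> xi_1^(e_2) xi_2^(e_3) ...
  (the ring map with xi_k^(2^l) |-> xi_(k-1)^(2^l), xi_1^(2^(i+1)) |-> 1),
  extended F_2-linearly.  The formula does not depend on i; phi_i is its restriction
  to (A//A(i))_*.\<close>
definition shift_mono :: "mono \<Rightarrow> mono" where
  "shift_mono m = Poly_Mapping.map_key Suc m"

definition phi :: "int \<Rightarrow> dualA \<Rightarrow> dualA" where
  "phi i p = (\<Sum>m\<in>Poly_Mapping.keys p. Poly_Mapping.single (shift_mono m) (Poly_Mapping.lookup p m))"

end

theory Submission
  imports Defs
begin

(* (1) Linear algebra of finitely supported functions: for any map f on index sets, "push f"
       sends a formal combination of the x to the same combination of the f x.  It is additive,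
       commutes with scalars, is functorial (push f o push g = push (f o g)), and hence carries a
       bijection S -> T to a bijection between combinations supported in S and in T.

   (2) Combinatorics of monomials: with e_1 the exponent of xi_1, the Brown-Gitler weight
       satisfies  w(m) = e_1 + 2 w(shift m),  and m is a monomial of (A//A(i))_* iff 2^(i+1)
       divides e_1 and shift m is a monomial of (A//A(i-1))_*.  So shift_mono is a bijection
       from the monomials spanning M_i(j) onto those spanning N_(i-1)(j); the inverse prepends
       the exponent e_1 = 2^(i+1) j - 2 w(m'), which is determined by the weight.

   Since M_i(j) and N_(i-1)(j) are exactly the combinations supported on these monomial sets,
   the theorem follows by applying (1) to the bijection of (2). *)

section \<open>Pushing finitely supported functions forward along a map\<close>

definition push :: "('a \<Rightarrow> 'b) \<Rightarrow> ('a \<Rightarrow>\<^sub>0 'c::comm_monoid_add) \<Rightarrow> 'b \<Rightarrow>\<^sub>0 'c" where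
  "push f p = (\<Sum>x\<in>Poly_Mapping.keys p. Poly_Mapping.single (f x) (Poly_Mapping.lookup p x))"

lemma push_superset:
  assumes "finite K" "Poly_Mapping.keys p \<subseteq> K"
  shows "push f p = (\<Sum>x\<in>K. Poly_Mapping.single (f x) (Poly_Mapping.lookup p x))"
  unfolding push_def
  by (rule sum.mono_neutral_left) (use assms in \<open>auto simp: in_keys_iff\<close>)

lemma lookup_push:
  "Poly_Mapping.lookup (push f p) y = (\<Sum>x\<in>{x\<in>Poly_Mapping.keys p. f x = y}. Poly_Mapping.lookup p x)"
  unfolding push_def lookup_sum by (simp add: lookup_single when_def sum.inter_filter)

lemma lookup_push_inj:
  assumes "inj f"
  shows "Poly_Mapping.lookup (push f p) (f x) = Poly_Mapping.lookup p x"
proof -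
  have "{x'\<in>Poly_Mapping.keys p. f x' = f x} = (if x \<in> Poly_Mapping.keys p then {x} else {})"
    using assms by (auto dest: injD)
  then show ?thesis by (simp add: lookup_push in_keys_iff)
qed

lemma lookup_push_notin:
  assumes "y \<notin> range f"
  shows "Poly_Mapping.lookup (push f p) y = 0"
  using assms by (auto simp: lookup_push intro: sum.neutral)

lemma push_add: "push f (p + q) = push f p + push f q"
proof -
  let ?K = "Poly_Mapping.keys p \<union> Poly_Mapping.keys q"
  have "push f (p + q) = (\<Sum>x\<in>?K. Poly_Mapping.single (f x) (Poly_Mapping.lookup p x + Poly_Mapping.lookup q x))"
    using keys_add[of p q] by (subst push_superset[of ?K]) (auto simp: lookup_add)
  also have "\<dots> = push f p + push f q"
    by (simp add: single_add sum.distrib push_superset[of ?K])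
  finally show ?thesis .
qed

lemma push_scale:
  fixes c :: "'c::semiring_0"
  shows "push f (Poly_Mapping.map ((*) c) p) = Poly_Mapping.map ((*) c) (push f p)"
proof (rule poly_mapping_eqI)
  fix y
  have lookup_scale: "Poly_Mapping.lookup (Poly_Mapping.map ((*) c) q) x = c * Poly_Mapping.lookup q x"
    for q :: "'d \<Rightarrow>\<^sub>0 'c" and x
    by (simp add: map.rep_eq when_def)
  have "Poly_Mapping.lookup (push f (Poly_Mapping.map ((*) c) p)) y
      = (\<Sum>x\<in>{x\<in>Poly_Mapping.keys p. f x = y}. c * Poly_Mapping.lookup p x)"
    unfolding lookup_push lookup_scale
    by (rule sum.mono_neutral_left) (auto simp: in_keys_iff lookup_scale)
  then show "Poly_Mapping.lookup (push f (Poly_Mapping.map ((*) c) p)) y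
      = Poly_Mapping.lookup (Poly_Mapping.map ((*) c) (push f p)) y"
    by (simp add: lookup_scale lookup_push sum_distrib_left)
qed

lemma push_zero [simp]: "push f 0 = 0"
  by (simp add: push_def)

lemma push_single [simp]: "push f (Poly_Mapping.single x v) = Poly_Mapping.single (f x) v"
  by (simp add: push_def)

lemma push_sum: "push f (sum g A) = (\<Sum>a\<in>A. push f (g a))"
  by (induction A rule: infinite_finite_induct) (simp_all add: push_add)

lemma push_comp: "push f (push g p) = push (f \<circ> g) p"
proof -
  have "push f (push g p)
      = (\<Sum>x\<in>Poly_Mapping.keys p. push f (Poly_Mapping.single (g x) (Poly_Mapping.lookup p x)))"
    by (simp only: push_def[of g] push_sum)
  then show ?thesis by (simp add: push_def[of "f \<circ> g"])
qed

lemma push_id: "push (\<lambda>x. x) p = p"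
proof (rule poly_mapping_eqI)
  fix y
  have "{x\<in>Poly_Mapping.keys p. x = y} = (if y \<in> Poly_Mapping.keys p then {y} else {})"
    by auto
  then show "Poly_Mapping.lookup (push (\<lambda>x. x) p) y = Poly_Mapping.lookup p y"
    by (simp add: lookup_push in_keys_iff)
qed

lemma push_cong: "(\<And>x. x \<in> Poly_Mapping.keys p \<Longrightarrow> f x = g x) \<Longrightarrow> push f p = push g p"
  by (simp add: push_def)

lemma keys_push: "Poly_Mapping.keys (push f p) \<subseteq> f ` Poly_Mapping.keys p"
proof
  fix y assume "y \<in> Poly_Mapping.keys (push f p)"
  have "{x\<in>Poly_Mapping.keys p. f x = y} \<noteq> {}"
  proof
    assume "{x\<in>Poly_Mapping.keys p. f x = y} = {}"
    then have "Poly_Mapping.lookup (push f p) y = 0" by (simp only: lookup_push sum.empty)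
    with \<open>y \<in> Poly_Mapping.keys (push f p)\<close> show False by (simp add: in_keys_iff)
  qed
  then show "y \<in> f ` Poly_Mapping.keys p" by auto
qed

lemma push_bij_betw:
  fixes f :: "'a \<Rightarrow> 'b"
  assumes "bij_betw f S T"
  shows "bij_betw (push f :: ('a \<Rightarrow>\<^sub>0 'c::comm_monoid_add) \<Rightarrow> _)
           {p. Poly_Mapping.keys p \<subseteq> S} {q. Poly_Mapping.keys q \<subseteq> T}"
proof (rule bij_betw_byWitness[where f' = "push (inv_into S f)"])
  have inv_f: "\<And>x. x \<in> S \<Longrightarrow> inv_into S f (f x) = x" "\<And>y. y \<in> T \<Longrightarrow> f (inv_into S f y) = y"
    using assms by (auto simp: bij_betw_def bij_betw_inv_into_right)
  show "\<forall>p\<in>{p :: 'a \<Rightarrow>\<^sub>0 'c. Poly_Mapping.keys p \<subseteq> S}. push (inv_into S f) (push f p) = p"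
  proof
    fix p :: "'a \<Rightarrow>\<^sub>0 'c" assume "p \<in> {p. Poly_Mapping.keys p \<subseteq> S}"
    then have "push (inv_into S f \<circ> f) p = push (\<lambda>x. x) p"
      using inv_f(1) by (intro push_cong) auto
    then show "push (inv_into S f) (push f p) = p" by (simp add: push_comp push_id)
  qed
  show "\<forall>q\<in>{q :: 'b \<Rightarrow>\<^sub>0 'c. Poly_Mapping.keys q \<subseteq> T}. push f (push (inv_into S f) q) = q"
  proof
    fix q :: "'b \<Rightarrow>\<^sub>0 'c" assume "q \<in> {q. Poly_Mapping.keys q \<subseteq> T}"
    then have "push (f \<circ> inv_into S f) q = push (\<lambda>x. x) q"
      using inv_f(2) by (intro push_cong) auto
    then show "push f (push (inv_into S f) q) = q" by (simp add: push_comp push_id)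
  qed
  show "push f ` {p :: 'a \<Rightarrow>\<^sub>0 'c. Poly_Mapping.keys p \<subseteq> S} \<subseteq> {q. Poly_Mapping.keys q \<subseteq> T}"
  proof safe
    fix p :: "'a \<Rightarrow>\<^sub>0 'c" and y assume "Poly_Mapping.keys p \<subseteq> S" "y \<in> Poly_Mapping.keys (push f p)"
    then show "y \<in> T" using keys_push[of f p] assms unfolding bij_betw_def by blast
  qed
  show "push (inv_into S f) ` {q :: 'b \<Rightarrow>\<^sub>0 'c. Poly_Mapping.keys q \<subseteq> T} \<subseteq> {p. Poly_Mapping.keys p \<subseteq> S}"
  proof safe
    fix q :: "'b \<Rightarrow>\<^sub>0 'c" and x
    assume "Poly_Mapping.keys q \<subseteq> T" "x \<in> Poly_Mapping.keys (push (inv_into S f) q)"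
    then show "x \<in> S" using keys_push[of "inv_into S f" q] assms unfolding bij_betw_def
      by (blast intro: inv_into_into)
  qed
qed

lemma phi_eq_push: "phi i = push shift_mono"
  by (simp add: fun_eq_iff phi_def push_def)

section \<open>Shifting monomials\<close>

lemma lookup_shift_mono [simp]:
  "Poly_Mapping.lookup (shift_mono m) k = Poly_Mapping.lookup m (Suc k)"
  unfolding shift_mono_def by (simp add: map_key.rep_eq)

definition cons_mono :: "nat \<Rightarrow> mono \<Rightarrow> mono" where
  "cons_mono e m = Poly_Mapping.single 0 e + push Suc m"

lemma lookup_cons_mono_0 [simp]: "Poly_Mapping.lookup (cons_mono e m) 0 = e"
  by (simp add: cons_mono_def lookup_add lookup_push_notin)

lemma lookup_cons_mono_Suc [simp]: "Poly_Mapping.lookup (cons_mono e m) (Suc k) = Poly_Mapping.lookup m k"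
  by (simp add: cons_mono_def lookup_add lookup_single lookup_push_inj)

lemma shift_cons_mono [simp]: "shift_mono (cons_mono e m) = m"
  by (rule poly_mapping_eqI) simp

lemma cons_shift_mono: "cons_mono (Poly_Mapping.lookup m 0) (shift_mono m) = m"
proof (rule poly_mapping_eqI)
  fix k show "Poly_Mapping.lookup (cons_mono (Poly_Mapping.lookup m 0) (shift_mono m)) k = Poly_Mapping.lookup m k"
    by (cases k) simp_all
qed

lemma bg_weight_superset:
  assumes "finite K" "Poly_Mapping.keys m \<subseteq> K"
  shows "bg_weight m = (\<Sum>k\<in>K. Poly_Mapping.lookup m k * 2 ^ k)"
  unfolding bg_weight_def
  by (rule sum.mono_neutral_left) (use assms in \<open>auto simp: in_keys_iff\<close>)

lemma bg_weight_shift: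
  "bg_weight m = Poly_Mapping.lookup m 0 + 2 * bg_weight (shift_mono m)"
proof -
  obtain N where N: "Poly_Mapping.keys m \<subseteq> {..<N}"
    using finite_keys[of m] by (auto simp: finite_nat_set_iff_bounded)
  have N_shift: "Poly_Mapping.keys (shift_mono m) \<subseteq> {..<N}"
  proof
    fix k assume "k \<in> Poly_Mapping.keys (shift_mono m)"
    then have "Suc k \<in> Poly_Mapping.keys m" by (simp add: in_keys_iff)
    then show "k \<in> {..<N}" using N by auto
  qed
  have "bg_weight m = (\<Sum>k<Suc N. Poly_Mapping.lookup m k * 2 ^ k)"
    using N by (intro bg_weight_superset) auto
  also have "\<dots> = Poly_Mapping.lookup m 0 + (\<Sum>k<N. Poly_Mapping.lookup m (Suc k) * 2 ^ Suc k)"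
    by (subst sum.lessThan_Suc_shift) simp
  also have "\<dots> = Poly_Mapping.lookup m 0 + 2 * (\<Sum>k<N. Poly_Mapping.lookup (shift_mono m) k * 2 ^ k)"
    by (simp add: sum_distrib_left mult.commute mult.left_commute)
  also have "\<dots> = Poly_Mapping.lookup m 0 + 2 * bg_weight (shift_mono m)"
    using N_shift by (simp add: bg_weight_superset[of "{..<N}"])
  finally show ?thesis .
qed

lemma quot_mono_nat:
  "quot_mono (int i) m \<longleftrightarrow> (\<forall>k<Suc i. 2 ^ (i + 1 - k) dvd Poly_Mapping.lookup m k)"
proof -
  have "nat (int i + 1 - int k) = i + 1 - k" if "k \<le> i" for k
    using that by simp
  then show ?thesis by (auto simp: quot_mono_def less_Suc_eq_le)
qed

lemma quot_mono_pred:
  "quot_mono (int i - 1) m \<longleftrightarrow> (\<forall>k<i. 2 ^ (i - k) dvd Poly_Mapping.lookup m k)"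
proof -
  have "nat (int i - 1 + 1 - int k) = i - k" if "k < i" for k
    using that by simp
  then show ?thesis by (auto simp: quot_mono_def)
qed

lemma quot_mono_shift:
  "quot_mono (int i) m \<longleftrightarrow>
     2 ^ (i + 1) dvd Poly_Mapping.lookup m 0 \<and> quot_mono (int i - 1) (shift_mono m)"
  by (simp add: quot_mono_nat quot_mono_pred All_less_Suc2)

lemma quot_mono_weight_dvd: "quot_mono (int i - 1) m \<Longrightarrow> 2 ^ i dvd bg_weight m"
proof (induction i arbitrary: m)
  case 0
  then show ?case by simp
next
  case (Suc i)
  then have "quot_mono (int i) m" by simp
  then have "2 ^ Suc i dvd Poly_Mapping.lookup m 0" and "2 ^ i dvd bg_weight (shift_mono m)"
    using Suc.IH by (auto simp: quot_mono_shift)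
  then show ?case by (simp add: bg_weight_shift[of m])
qed

section \<open>The monomial bases of M_i(j) and N_(i-1)(j)\<close>

definition M_mono :: "nat \<Rightarrow> nat \<Rightarrow> mono set" where
  "M_mono i j = {m. quot_mono (int i) m \<and> bg_weight m = 2 ^ (i + 1) * j}"

definition N_mono :: "nat \<Rightarrow> nat \<Rightarrow> mono set" where
  "N_mono i j = {m. quot_mono (int i - 1) m \<and> bg_weight m \<le> 2 ^ i * j}"

lemma M_sub_eq: "M_sub (int i) j = {p. Poly_Mapping.keys p \<subseteq> M_mono i j}"
proof -
  have "nat (int i + 1) = i + 1" by simp
  then show ?thesis unfolding M_sub_def M_mono_def by auto
qed

lemma N_sub_eq: "N_sub (int i - 1) j = {p. Poly_Mapping.keys p \<subseteq> N_mono i j}"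
  unfolding N_sub_def N_mono_def by auto

text \<open>The combinatorial heart: shifting is a bijection between the two monomial bases, with inverse
  prepending the xi_1-exponent forced by the weight.\<close>
lemma shift_mono_bij_betw: "bij_betw shift_mono (M_mono i j) (N_mono i j)"
proof (rule bij_betw_byWitness[where f' = "\<lambda>m'. cons_mono (2 ^ (i + 1) * j - 2 * bg_weight m') m'"])
  show "\<forall>m\<in>M_mono i j. cons_mono (2 ^ (i + 1) * j - 2 * bg_weight (shift_mono m)) (shift_mono m) = m"
  proof
    fix m assume "m \<in> M_mono i j"
    then have "Poly_Mapping.lookup m 0 + 2 * bg_weight (shift_mono m) = 2 ^ (i + 1) * j"
      using bg_weight_shift[of m] by (simp add: M_mono_def)
    then have "2 ^ (i + 1) * j - 2 * bg_weight (shift_mono m) = Poly_Mapping.lookup m 0"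
      by linarith
    then show "cons_mono (2 ^ (i + 1) * j - 2 * bg_weight (shift_mono m)) (shift_mono m) = m"
      by (simp add: cons_shift_mono)
  qed
  show "\<forall>m'\<in>N_mono i j. shift_mono (cons_mono (2 ^ (i + 1) * j - 2 * bg_weight m') m') = m'"
    by simp
  show "shift_mono ` M_mono i j \<subseteq> N_mono i j"
  proof
    fix m' assume "m' \<in> shift_mono ` M_mono i j"
    then obtain m where m: "m \<in> M_mono i j" and m': "m' = shift_mono m" by blast
    have "2 * bg_weight m' \<le> 2 * (2 ^ i * j)"
      using m bg_weight_shift[of m] by (simp add: M_mono_def m')
    then show "m' \<in> N_mono i j"
      using m by (simp add: M_mono_def N_mono_def m' quot_mono_shift)
  qed
  show "(\<lambda>m'. cons_mono (2 ^ (i + 1) * j - 2 * bg_weight m') m') ` N_mono i j \<subseteq> M_mono i j"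
  proof
    fix m assume "m \<in> (\<lambda>m'. cons_mono (2 ^ (i + 1) * j - 2 * bg_weight m') m') ` N_mono i j"
    then obtain m' where m': "m' \<in> N_mono i j"
      and m: "m = cons_mono (2 ^ (i + 1) * j - 2 * bg_weight m') m'" by blast
    have quot: "quot_mono (int i - 1) m'" and weight: "2 * bg_weight m' \<le> 2 ^ (i + 1) * j"
      using m' by (auto simp: N_mono_def)
    have "2 ^ (i + 1) dvd 2 * bg_weight m'"
      using quot_mono_weight_dvd[OF quot] by simp
    then have "2 ^ (i + 1) dvd Poly_Mapping.lookup m 0"
      by (simp add: m)
    then show "m \<in> M_mono i j"
      using quot weight bg_weight_shift[of m] by (simp add: M_mono_def quot_mono_shift m)
  qed
qed

theorem lemma5p2:
  fixes i j :: nat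
  shows "(\<forall>p\<in>M_sub (int i) j. \<forall>q\<in>M_sub (int i) j. phi (int i) (p + q) = phi (int i) p + phi (int i) q)
       \<and> (\<forall>c::bit. \<forall>p\<in>M_sub (int i) j. phi (int i) (Poly_Mapping.map ((*) c) p) = Poly_Mapping.map ((*) c) (phi (int i) p))
       \<and> bij_betw (phi (int i)) (M_sub (int i) j) (N_sub (int i - 1) j)"
  unfolding phi_eq_push M_sub_eq N_sub_eq
proof (intro conjI ballI allI)
  fix p q :: dualA
  show "push shift_mono (p + q) = push shift_mono p + push shift_mono q"
    by (rule push_add)
next
  fix c :: bit and p :: dualA
  show "push shift_mono (Poly_Mapping.map ((*) c) p) = Poly_Mapping.map ((*) c) (push shift_mono p)"
    by (rule push_scale)
next
  show "bij_betw (push shift_mono) {p :: dualA. Poly_Mapping.keys p \<subseteq> M_mono i j}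
          {q. Poly_Mapping.keys q \<subseteq> N_mono i j}"
    by (rule push_bij_betw[OF shift_mono_bij_betw])
qed

end
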